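(* Let $f:A\to B$ be a ring homomorphism, $\mathfrak b$ an ideal of $B$, and $A\bowtie^f\mathfrak b:=\{(a,f(a)+b): a\in A,\ b\in\mathfrak b\}\subseteq A\times B$. (1) If $A\bowtie^f\mathfrak b$ is an arithmetical ring, then $A$ is an arithmetical ring. (2) If $A\bowtie^f\mathfrak b$ is a Gauss ring, then $A$ is a Gauss ring.
   Context: All rings are commutative with identity. A ring is arithmetical if every finitely generated ideal is locally principal (principal after localizing at every maximal ideal). A ring $R$ is a Gauss ring if, for an indeterminate $T$, every $g\in R[T]$ satisfies $c(gh)=c(g)c(h)$ for all $h\in R[T]$, where $c(\cdot)$ is the ideal generated by the coefficients. *)

theory Defs
  imports "HOL-Algebra.Algebra"
begin

definition amalgamation ::
  "('a, 'c) ring_scheme \<Rightarrow> ('b, 'd) ring_scheme \<Rightarrow> ('a \<Rightarrow> 'b) \<Rightarrow> 'b set \<Rightarrow> ('a \<times> 'b) ring"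
  where "amalgamation A B f J =
    (RDirProd A B) \<lparr> carrier := {(a, f a \<oplus>\<^bsub>B\<^esub> b) | a b. a \<in> carrier A \<and> b \<in> J} \<rparr>"

text \<open>Localization of R at the complement S of a prime ideal, written out via fractions:
  r/s = r'/s' in R_S iff u(rs' - r's) = 0 for some u in S.\<close>
definition frac_eq :: "('a, 'c) ring_scheme \<Rightarrow> 'a set \<Rightarrow> 'a \<times> 'a \<Rightarrow> 'a \<times> 'a \<Rightarrow> bool"
  where "frac_eq R S x y \<longleftrightarrow>
    (\<exists>u\<in>S. u \<otimes>\<^bsub>R\<^esub> ((fst x \<otimes>\<^bsub>R\<^esub> snd y) \<ominus>\<^bsub>R\<^esub> (fst y \<otimes>\<^bsub>R\<^esub> snd x)) = \<zero>\<^bsub>R\<^esub>)"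

text \<open>The extension I_M = {i/s : i in I, s notin M} of the ideal I to the localization R_M
  is a principal ideal of R_M, i.e. I_M = g R_M for some g = g1/g2 in R_M.\<close>
definition principal_at :: "('a, 'c) ring_scheme \<Rightarrow> 'a set \<Rightarrow> 'a set \<Rightarrow> bool"
  where "principal_at R M I \<longleftrightarrow>
    (let S = carrier R - M in
     \<exists>g1 \<in> carrier R. \<exists>g2 \<in> S.
       (\<exists>i\<in>I. \<exists>s\<in>S. frac_eq R S (g1, g2) (i, s)) \<and>
       (\<forall>i\<in>I. \<forall>s\<in>S. \<exists>r\<in>carrier R. \<exists>t\<in>S.
          frac_eq R S (i, s) (r \<otimes>\<^bsub>R\<^esub> g1, t \<otimes>\<^bsub>R\<^esub> g2)))"

definition locally_principal :: "('a, 'c) ring_scheme \<Rightarrow> 'a set \<Rightarrow> bool"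
  where "locally_principal R I \<longleftrightarrow> (\<forall>M. maximalideal M R \<longrightarrow> principal_at R M I)"

definition arithmetical :: "('a, 'c) ring_scheme \<Rightarrow> bool"
  where "arithmetical R \<longleftrightarrow>
    (\<forall>Gs. finite Gs \<and> Gs \<subseteq> carrier R \<longrightarrow> locally_principal R (genideal R Gs))"

definition content :: "('a, 'c) ring_scheme \<Rightarrow> (nat \<Rightarrow> 'a) \<Rightarrow> 'a set"
  where "content R g = genideal R (range (coeff (UP R) g))"

definition gauss_ring :: "('a, 'c) ring_scheme \<Rightarrow> bool"
  where "gauss_ring R \<longleftrightarrow>
    (\<forall>g \<in> carrier (UP R). \<forall>h \<in> carrier (UP R).
       content R (g \<otimes>\<^bsub>UP R\<^esub> h) = ideal_prod R (content R g) (content R h))"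

end

theory Submission
  imports Defs
begin

(*
  The projection fst maps A \<bowtie>\<^sup>f J onto A, since (a, f a) lies in the amalgamation, so it
  suffices that both properties descend along a surjective homomorphism h : R \<rightarrow> S of
  commutative rings. Finitely generated ideals and polynomials of S lift to R, and h carries
  generated ideals, ideal products and contents of polynomials of R onto those of S. Maximal
  ideals M of S pull back to maximal ideals of R, and a local generator g\<^sub>1/g\<^sub>2 of an ideal
  at h\<inverse>(M) is sent to a local generator of its image at M, because every element outside M
  has a preimage outside h\<inverse>(M). In the same way c(PQ) = c(P) c(Q) in R maps to
  c(pq) = c(p) c(q) in S.
*)

lemma (in ring_hom_cring) frac_eq_hom:
  assumes "frac_eq R T (x1, x2) (y1, y2)" and "T \<subseteq> carrier R" "h ` T \<subseteq> U"
    and "x1 \<in> carrier R" "x2 \<in> carrier R" "y1 \<in> carrier R" "y2 \<in> carrier R"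
  shows "frac_eq S U (h x1, h x2) (h y1, h y2)"
proof -
  obtain u where u: "u \<in> T" "u \<otimes> ((x1 \<otimes> y2) \<ominus> (y1 \<otimes> x2)) = \<zero>"
    using assms(1) unfolding frac_eq_def by auto
  then have "h (u \<otimes> ((x1 \<otimes> y2) \<ominus> (y1 \<otimes> x2))) = \<zero>\<^bsub>S\<^esub>" by simp
  then have "h u \<otimes>\<^bsub>S\<^esub> ((h x1 \<otimes>\<^bsub>S\<^esub> h y2) \<ominus>\<^bsub>S\<^esub> (h y1 \<otimes>\<^bsub>S\<^esub> h x2)) = \<zero>\<^bsub>S\<^esub>"
    using u(1) assms(2,4-7) by (simp add: subsetD)
  then show ?thesis using u(1) assms(3) unfolding frac_eq_def by auto
qed

lemma content_eq_genideal_range: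
  "P \<in> up R \<Longrightarrow> content R P = genideal R (range P)"
  unfolding content_def by (simp add: UP_def)

lemma (in ring_hom_cring) up_comp_closed:
  assumes P: "P \<in> up R"
  shows "h \<circ> P \<in> up S"
proof (rule mem_upI)
  show "(h \<circ> P) n \<in> carrier S" for n using P by auto
  obtain n where "bound \<zero> n P" using R.bound_upD[OF P] by blast
  then have "bound \<zero>\<^bsub>S\<^esub> n (h \<circ> P)" by (simp add: bound_def)
  then show "\<exists>n. bound \<zero>\<^bsub>S\<^esub> n (h \<circ> P)" by blast
qed

lemma (in ring_hom_cring) UP_mult_comp:
  assumes P: "P \<in> up R" and Q: "Q \<in> up R"
  shows "h \<circ> (P \<otimes>\<^bsub>UP R\<^esub> Q) = (h \<circ> P) \<otimes>\<^bsub>UP S\<^esub> (h \<circ> Q)"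
proof
  fix n
  have "(h \<circ> (P \<otimes>\<^bsub>UP R\<^esub> Q)) n = h (\<Oplus>i \<in> {..n}. P i \<otimes> Q (n - i))"
    using P Q by (simp add: UP_def)
  also have "\<dots> = (\<Oplus>\<^bsub>S\<^esub>i \<in> {..n}. (h \<circ> P) i \<otimes>\<^bsub>S\<^esub> (h \<circ> Q) (n - i))"
    using P Q by (simp add: comp_def mem_upD)
  also have "\<dots> = ((h \<circ> P) \<otimes>\<^bsub>UP S\<^esub> (h \<circ> Q)) n"
    using up_comp_closed[OF P] up_comp_closed[OF Q] by (simp add: UP_def)
  finally show "(h \<circ> (P \<otimes>\<^bsub>UP R\<^esub> Q)) n = ((h \<circ> P) \<otimes>\<^bsub>UP S\<^esub> (h \<circ> Q)) n" .
qed

locale surjective_ring_hom_cring = ring_hom_cring +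
  assumes hom_surjective: "h ` carrier R = carrier S"
begin

lemma obtain_preimage:
  assumes "a \<in> carrier S"
  obtains r where "r \<in> carrier R" "h r = a"
  using assms unfolding hom_surjective[symmetric] by blast

lemma ideal_image:
  assumes I: "ideal I R"
  shows "ideal (h ` I) S"
proof (rule idealI)
  show "ring S" ..
  show "subgroup (h ` I) (add_monoid S)"
    by (rule ring.img_is_add_subgroup[OF additive_subgroup.a_subgroup[OF ideal.axioms(1)[OF I]]])
next
  fix a x assume a: "a \<in> h ` I" and x: "x \<in> carrier S"
  obtain i where i: "i \<in> I" "a = h i" using a by blast
  obtain r where r: "r \<in> carrier R" "x = h r" using x by (metis obtain_preimage)
  have "a \<otimes>\<^bsub>S\<^esub> x = h (i \<otimes> r)" "x \<otimes>\<^bsub>S\<^esub> a = h (r \<otimes> i)"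
    using i r ideal.Icarr[OF I] by simp_all
  moreover have "i \<otimes> r \<in> I" "r \<otimes> i \<in> I"
    using i r ideal.I_r_closed[OF I] ideal.I_l_closed[OF I] by simp_all
  ultimately show "a \<otimes>\<^bsub>S\<^esub> x \<in> h ` I" "x \<otimes>\<^bsub>S\<^esub> a \<in> h ` I" by blast+
qed

lemma genideal_image:
  assumes Gs: "Gs \<subseteq> carrier R"
  shows "h ` genideal R Gs = genideal S (h ` Gs)"
proof
  have hGs: "h ` Gs \<subseteq> carrier S" using Gs by auto
  have "genideal R Gs \<subseteq> {r \<in> carrier R. h r \<in> genideal S (h ` Gs)}"
    by (rule R.genideal_minimal[OF ring.ideal_vimage[OF S.genideal_ideal[OF hGs]]])
      (use Gs S.genideal_self[OF hGs] in blast)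
  then show "h ` genideal R Gs \<subseteq> genideal S (h ` Gs)" by blast
  show "genideal S (h ` Gs) \<subseteq> h ` genideal R Gs"
    by (rule S.genideal_minimal[OF ideal_image[OF R.genideal_ideal[OF Gs]]])
      (use R.genideal_self[OF Gs] in blast)
qed

lemma ideal_prod_image:
  assumes I: "ideal I R" and K: "ideal K R"
  shows "h ` ideal_prod R I K = ideal_prod S (h ` I) (h ` K)"
proof -
  have "h ` (I <#> K) = h ` I <#>\<^bsub>S\<^esub> h ` K"
    using ideal.Icarr[OF I] ideal.Icarr[OF K] unfolding set_mult_def by force
  moreover have "I <#> K \<subseteq> carrier R"
    using ideal.Icarr[OF I] ideal.Icarr[OF K] unfolding set_mult_def by blast
  ultimately show ?thesis
    using R.ideal_prod_eq_genideal[OF I K] genideal_image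
      S.ideal_prod_eq_genideal[OF ideal_image[OF I] ideal_image[OF K]] by simp
qed

lemma maximalideal_vimage:
  assumes M: "maximalideal M S"
  shows "maximalideal {r \<in> carrier R. h r \<in> M} R" (is "maximalideal ?M R")
proof -
  have iM: "ideal M S" using M by (rule maximalideal.axioms(1))
  have one: "\<one>\<^bsub>S\<^esub> \<notin> M"
    using maximalideal.I_notcarr[OF M] ideal.one_imp_carrier[OF iM] by blast
  show ?thesis
  proof (rule maximalideal.intro[OF ring.ideal_vimage[OF iM]], rule maximalideal_axioms.intro)
    show "carrier R \<noteq> ?M"
    proof
      assume "carrier R = ?M"
      then have "h \<one> \<in> M" using R.one_closed by blast
      then show False using one by simp
    qed
    fix K assume K: "ideal K R" "?M \<subseteq> K" "K \<subseteq> carrier R"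
    have "M \<subseteq> h ` K"
    proof
      fix a assume "a \<in> M"
      moreover obtain r where "r \<in> carrier R" "h r = a"
        using ideal.Icarr[OF iM \<open>a \<in> M\<close>] by (rule obtain_preimage)
      ultimately show "a \<in> h ` K" using K(2) by blast
    qed
    then consider "h ` K = M" | "h ` K = carrier S"
      using maximalideal.I_maximal[OF M ideal_image[OF K(1)]] K(3) by blast
    then show "K = ?M \<or> K = carrier R"
    proof cases
      case 1
      then show ?thesis using K(2,3) by blast
    next
      case 2
      then obtain k where k: "k \<in> K" "h k = \<one>\<^bsub>S\<^esub>" by (metis S.one_closed imageE)
      have kc: "k \<in> carrier R" using k K(3) by blast
      have "\<one> \<ominus> k \<in> ?M"
        using k kc additive_subgroup.zero_closed[OF ideal.axioms(1)[OF iM]] by (simp add: S.r_neg S.minus_eq)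
      then have "(\<one> \<ominus> k) \<oplus> k \<in> K"
        using K(2) k(1) additive_subgroup.a_closed[OF ideal.axioms(1)[OF K(1)]] by blast
      then have "\<one> \<in> K" using kc by (simp add: R.minus_eq R.a_assoc R.l_neg)
      then show ?thesis using ideal.one_imp_carrier[OF K(1)] by blast
    qed
  qed
qed

lemma principal_at_image:
  assumes I: "I \<subseteq> carrier R"
    and principal: "principal_at R {r \<in> carrier R. h r \<in> M} I"
  shows "principal_at S M (h ` I)"
proof -
  define T where "T = carrier R - {r \<in> carrier R. h r \<in> M}"
  have T: "T \<subseteq> carrier R" "h ` T \<subseteq> carrier S - M" unfolding T_def by auto
  obtain g1 g2 where g: "g1 \<in> carrier R" "g2 \<in> T"
    and generated: "\<exists>i\<in>I. \<exists>t\<in>T. frac_eq R T (g1, g2) (i, t)"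
    and generates: "\<forall>i\<in>I. \<forall>t\<in>T. \<exists>r\<in>carrier R. \<exists>t'\<in>T. frac_eq R T (i, t) (r \<otimes> g1, t' \<otimes> g2)"
    using principal unfolding principal_at_def Let_def T_def by blast
  have "\<exists>i\<in>h ` I. \<exists>t\<in>carrier S - M. frac_eq S (carrier S - M) (h g1, h g2) (i, t)"
  proof -
    obtain i t where it: "i \<in> I" "t \<in> T" and eq: "frac_eq R T (g1, g2) (i, t)"
      using generated by blast
    have "frac_eq S (carrier S - M) (h g1, h g2) (h i, h t)"
      by (rule frac_eq_hom[OF eq T]) (use g it I T in auto)
    moreover have "h i \<in> h ` I" "h t \<in> carrier S - M" using it T by auto
    ultimately show ?thesis by blast
  qed
  moreover have "\<exists>r\<in>carrier S. \<exists>t'\<in>carrier S - M.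
      frac_eq S (carrier S - M) (i, t) (r \<otimes>\<^bsub>S\<^esub> h g1, t' \<otimes>\<^bsub>S\<^esub> h g2)"
    if i: "i \<in> h ` I" and t: "t \<in> carrier S - M" for i t
  proof -
    obtain i0 where i0: "i0 \<in> I" "i = h i0" using i by blast
    obtain t0 where t0: "t0 \<in> carrier R" "h t0 = t" using t by (metis DiffD1 obtain_preimage)
    then have "t0 \<in> T" using t unfolding T_def by blast
    then obtain r t' where rt: "r \<in> carrier R" "t' \<in> T"
      and eq: "frac_eq R T (i0, t0) (r \<otimes> g1, t' \<otimes> g2)"
      using generates i0(1) by blast
    have "frac_eq S (carrier S - M) (h i0, h t0) (h (r \<otimes> g1), h (t' \<otimes> g2))"
      by (rule frac_eq_hom[OF eq T]) (use i0 t0 g rt I T in auto)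
    then have "frac_eq S (carrier S - M) (i, t) (h r \<otimes>\<^bsub>S\<^esub> h g1, h t' \<otimes>\<^bsub>S\<^esub> h g2)"
      using i0 t0 g rt T by (auto simp: subsetD)
    moreover have "h r \<in> carrier S" "h t' \<in> carrier S - M" using rt T by auto
    ultimately show ?thesis by blast
  qed
  ultimately show ?thesis using g T unfolding principal_at_def Let_def by blast
qed

lemma arithmetical_image:
  assumes "arithmetical R"
  shows "arithmetical S"
  unfolding arithmetical_def locally_principal_def
proof (intro allI impI)
  fix Gs M assume Gs: "finite Gs \<and> Gs \<subseteq> carrier S" and M: "maximalideal M S"
  then have "Gs \<subseteq> h ` carrier R" by (simp add: hom_surjective)
  then obtain Hs where Hs: "Hs \<subseteq> carrier R" "finite Hs" "Gs = h ` Hs"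
    using finite_subset_image[of Gs h "carrier R"] Gs by blast
  then have "locally_principal R (genideal R Hs)"
    using assms unfolding arithmetical_def by blast
  then have "principal_at R {r \<in> carrier R. h r \<in> M} (genideal R Hs)"
    using maximalideal_vimage[OF M] unfolding locally_principal_def by blast
  then have "principal_at S M (h ` genideal R Hs)"
    by (rule principal_at_image[rotated])
      (rule additive_subgroup.a_subset[OF ideal.axioms(1)[OF R.genideal_ideal[OF Hs(1)]]])
  then show "principal_at S M (genideal S Gs)"
    using genideal_image[OF Hs(1)] Hs(3) by simp
qed

lemma content_comp:
  assumes P: "P \<in> up R"
  shows "content S (h \<circ> P) = h ` content R P"
proof -
  have "range P \<subseteq> carrier R" using P by auto
  then show ?thesis
    using content_eq_genideal_range[OF P] content_eq_genideal_range[OF up_comp_closed[OF P]]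
      genideal_image by (simp add: image_comp)
qed

lemma obtain_up_preimage:
  assumes p: "p \<in> up S"
  obtains P where "P \<in> up R" "h \<circ> P = p"
proof -
  \<comment> \<open>Zero coefficients are lifted to zero so that the lift is again a polynomial.\<close>
  define P where "P n = (if p n = \<zero>\<^bsub>S\<^esub> then \<zero> else (SOME r. r \<in> carrier R \<and> h r = p n))" for n
  have lift: "P n \<in> carrier R \<and> h (P n) = p n" for n
  proof (cases "p n = \<zero>\<^bsub>S\<^esub>")
    case False
    have "\<exists>r. r \<in> carrier R \<and> h r = p n"
      using mem_upD[OF p] by (metis obtain_preimage)
    from someI_ex[OF this] show ?thesis unfolding P_def using False by simp
  qed (simp add: P_def)
  have "P \<in> up R"
  proof (rule mem_upI)
    show "P n \<in> carrier R" for n using lift by blast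
    obtain n where n: "bound \<zero>\<^bsub>S\<^esub> n p" using S.bound_upD[OF p] by blast
    have "bound \<zero> n P"
    proof
      fix m assume "n < m"
      then show "P m = \<zero>" using bound.bound[OF n] unfolding P_def by simp
    qed
    then show "\<exists>n. bound \<zero> n P" by blast
  qed
  moreover have "h \<circ> P = p" using lift by auto
  ultimately show ?thesis by (rule that)
qed

lemma gauss_ring_image:
  assumes "gauss_ring R"
  shows "gauss_ring S"
  unfolding gauss_ring_def
proof (intro ballI)
  fix p q assume "p \<in> carrier (UP S)" "q \<in> carrier (UP S)"
  then have "p \<in> up S" "q \<in> up S" by (simp_all add: UP_def)
  obtain P Q where P: "P \<in> up R" "p = h \<circ> P" and Q: "Q \<in> up R" "q = h \<circ> Q"
    using obtain_up_preimage[OF \<open>p \<in> up S\<close>] obtain_up_preimage[OF \<open>q \<in> up S\<close>] by metis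
  have PQ: "P \<otimes>\<^bsub>UP R\<^esub> Q \<in> up R"
    using R.up_mult_closed[OF P(1) Q(1)] P(1) Q(1) by (simp add: UP_def)
  have ideals: "ideal (content R P) R" "ideal (content R Q) R"
    using P(1) Q(1) by (auto simp: content_eq_genideal_range intro!: R.genideal_ideal)
  have "content S (p \<otimes>\<^bsub>UP S\<^esub> q) = h ` content R (P \<otimes>\<^bsub>UP R\<^esub> Q)"
    using P Q content_comp[OF PQ] by (simp add: UP_mult_comp)
  also have "\<dots> = h ` ideal_prod R (content R P) (content R Q)"
    using assms P(1) Q(1) unfolding gauss_ring_def by (simp add: UP_def)
  also have "\<dots> = ideal_prod S (content S p) (content S q)"
    using ideal_prod_image[OF ideals] P Q by (simp add: content_comp)
  finally show "content S (p \<otimes>\<^bsub>UP S\<^esub> q) = ideal_prod S (content S p) (content S q)" .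
qed

end

lemma RDirProd_mult: "x \<otimes>\<^bsub>RDirProd R S\<^esub> y = (fst x \<otimes>\<^bsub>R\<^esub> fst y, snd x \<otimes>\<^bsub>S\<^esub> snd y)"
  by (simp add: RDirProd_def DirProd_def monoid.defs case_prod_beta)

lemma RDirProd_add: "x \<oplus>\<^bsub>RDirProd R S\<^esub> y = (fst x \<oplus>\<^bsub>R\<^esub> fst y, snd x \<oplus>\<^bsub>S\<^esub> snd y)"
  by (simp add: RDirProd_def DirProd_def monoid.defs case_prod_beta)

lemma RDirProd_one: "\<one>\<^bsub>RDirProd R S\<^esub> = (\<one>\<^bsub>R\<^esub>, \<one>\<^bsub>S\<^esub>)"
  by (simp add: RDirProd_def DirProd_def monoid.defs)

lemma RDirProd_a_inv:
  assumes "ring R" "ring S" "x \<in> carrier R" "y \<in> carrier S"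
  shows "\<ominus>\<^bsub>RDirProd R S\<^esub> (x, y) = (\<ominus>\<^bsub>R\<^esub> x, \<ominus>\<^bsub>S\<^esub> y)"
  unfolding a_inv_def RDirProd_add_monoid
  by (rule inv_DirProd[OF abelian_group.a_group[OF ring.is_abelian_group[OF assms(1)]]
      abelian_group.a_group[OF ring.is_abelian_group[OF assms(2)]]]) (use assms in simp_all)

lemma subcring_amalgamation:
  assumes "cring A" "cring B" "f \<in> ring_hom A B" "ideal J B"
  shows "subcring {(a, f a \<oplus>\<^bsub>B\<^esub> b) | a b. a \<in> carrier A \<and> b \<in> J} (RDirProd A B)"
    (is "subcring ?H _")
proof -
  interpret A: cring A by fact
  interpret B: cring B by fact
  interpret F: ring_hom_cring A B f by unfold_locales fact
  interpret J: ideal J B by fact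
  have RD: "ring (RDirProd A B)" by (rule RDirProd_ring[OF A.ring_axioms B.ring_axioms])
  have memH: "(a, f a \<oplus>\<^bsub>B\<^esub> b) \<in> ?H" if "a \<in> carrier A" "b \<in> J" for a b
    using that by blast
  have H: "?H \<subseteq> carrier (RDirProd A B)"
    by (auto simp: RDirProd_carrier J.Icarr)
  have "subring ?H (RDirProd A B)"
  proof (rule ring.subringI[OF RD H])
    show "\<one>\<^bsub>RDirProd A B\<^esub> \<in> ?H"
      using memH[OF A.one_closed J.zero_closed] by (simp add: RDirProd_one)
  next
    fix x assume "x \<in> ?H"
    then obtain a b where x: "x = (a, f a \<oplus>\<^bsub>B\<^esub> b)" "a \<in> carrier A" "b \<in> J" by blast
    have "\<ominus>\<^bsub>RDirProd A B\<^esub> x = (\<ominus>\<^bsub>A\<^esub> a, f (\<ominus>\<^bsub>A\<^esub> a) \<oplus>\<^bsub>B\<^esub> \<ominus>\<^bsub>B\<^esub> b)"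
      using x J.Icarr by (simp add: RDirProd_a_inv[OF A.ring_axioms B.ring_axioms] B.minus_add)
    also have "\<dots> \<in> ?H" using x by (intro memH) simp_all
    finally show "\<ominus>\<^bsub>RDirProd A B\<^esub> x \<in> ?H" .
  next
    fix x y assume "x \<in> ?H" "y \<in> ?H"
    then obtain a b a' b' where x: "x = (a, f a \<oplus>\<^bsub>B\<^esub> b)" "a \<in> carrier A" "b \<in> J"
      and y: "y = (a', f a' \<oplus>\<^bsub>B\<^esub> b')" "a' \<in> carrier A" "b' \<in> J" by blast
    have bc: "b \<in> carrier B" "b' \<in> carrier B" using x(3) y(3) J.Icarr by auto
    have fc: "f a \<in> carrier B" "f a' \<in> carrier B" using x y by simp_all
    have "x \<otimes>\<^bsub>RDirProd A B\<^esub> y = (a \<otimes>\<^bsub>A\<^esub> a',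
        f (a \<otimes>\<^bsub>A\<^esub> a') \<oplus>\<^bsub>B\<^esub> (f a \<otimes>\<^bsub>B\<^esub> b' \<oplus>\<^bsub>B\<^esub> b \<otimes>\<^bsub>B\<^esub> (f a' \<oplus>\<^bsub>B\<^esub> b')))"
    proof -
      have "(f a \<oplus>\<^bsub>B\<^esub> b) \<otimes>\<^bsub>B\<^esub> (f a' \<oplus>\<^bsub>B\<^esub> b')
          = f a \<otimes>\<^bsub>B\<^esub> f a' \<oplus>\<^bsub>B\<^esub> (f a \<otimes>\<^bsub>B\<^esub> b' \<oplus>\<^bsub>B\<^esub> b \<otimes>\<^bsub>B\<^esub> (f a' \<oplus>\<^bsub>B\<^esub> b'))"
        using fc bc by algebra
      then show ?thesis using x y by (simp add: RDirProd_mult)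
    qed
    also have "\<dots> \<in> ?H"
      using x y bc fc by (intro memH) (simp_all add: J.I_l_closed J.I_r_closed)
    finally show "x \<otimes>\<^bsub>RDirProd A B\<^esub> y \<in> ?H" .
    have "x \<oplus>\<^bsub>RDirProd A B\<^esub> y = (a \<oplus>\<^bsub>A\<^esub> a', f (a \<oplus>\<^bsub>A\<^esub> a') \<oplus>\<^bsub>B\<^esub> (b \<oplus>\<^bsub>B\<^esub> b'))"
      using x y bc by (simp add: RDirProd_add B.a_ac)
    also have "\<dots> \<in> ?H" using x y by (intro memH) simp_all
    finally show "x \<oplus>\<^bsub>RDirProd A B\<^esub> y \<in> ?H" .
  qed
  then show ?thesis
    by (rule ring.subcringI[OF RD]) (use H in \<open>auto simp: RDirProd_mult RDirProd_carrier A.m_comm B.m_comm\<close>)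
qed

lemma cring_amalgamation:
  assumes "cring A" "cring B" "f \<in> ring_hom A B" "ideal J B"
  shows "cring (amalgamation A B f J)"
  using subcring_amalgamation[OF assms]
    ring.subcring_iff[OF RDirProd_ring[OF cring.axioms(1)[OF assms(1)] cring.axioms(1)[OF assms(2)]]
      subcringE(1)[OF subcring_amalgamation[OF assms]]]
  unfolding amalgamation_def by simp

lemma surjective_ring_hom_cring_fst_amalgamation:
  assumes "cring A" "cring B" "f \<in> ring_hom A B" "ideal J B"
  shows "surjective_ring_hom_cring (amalgamation A B f J) A fst"
proof -
  have carrier: "carrier (amalgamation A B f J) = {(a, f a \<oplus>\<^bsub>B\<^esub> b) | a b. a \<in> carrier A \<and> b \<in> J}"
    by (simp add: amalgamation_def)
  have "fst \<in> ring_hom (amalgamation A B f J) A"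
    by (rule ring_hom_memI)
      (auto simp: carrier amalgamation_def RDirProd_mult RDirProd_add RDirProd_one)
  moreover have "fst ` carrier (amalgamation A B f J) = carrier A"
  proof
    show "fst ` carrier (amalgamation A B f J) \<subseteq> carrier A" by (auto simp: carrier)
    show "carrier A \<subseteq> fst ` carrier (amalgamation A B f J)"
    proof
      fix a assume "a \<in> carrier A"
      then have "(a, f a \<oplus>\<^bsub>B\<^esub> \<zero>\<^bsub>B\<^esub>) \<in> carrier (amalgamation A B f J)"
        using additive_subgroup.zero_closed[OF ideal.axioms(1)[OF assms(4)]] by (auto simp: carrier)
      then show "a \<in> fst ` carrier (amalgamation A B f J)" by force
    qed
  qed
  ultimately show ?thesis
    by (intro surjective_ring_hom_cring.intro ring_hom_cring.intro ring_hom_cring_axioms.intro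
        surjective_ring_hom_cring_axioms.intro cring_amalgamation[OF assms] assms(1))
qed

theorem proposition4p7:
  fixes A :: "('a, 'c) ring_scheme" and B :: "('b, 'd) ring_scheme"
    and f :: "'a \<Rightarrow> 'b" and J :: "'b set"
  assumes "cring A" and "cring B" and "f \<in> ring_hom A B" and "ideal J B"
  shows "(arithmetical (amalgamation A B f J) \<longrightarrow> arithmetical A)
       \<and> (gauss_ring (amalgamation A B f J) \<longrightarrow> gauss_ring A)"
proof -
  interpret surjective_ring_hom_cring "amalgamation A B f J" A fst
    by (rule surjective_ring_hom_cring_fst_amalgamation[OF assms])
  show ?thesis using arithmetical_image gauss_ring_image by blast
qed

end
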